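(* In the term algebra $\mathfrak T_{L,X}$: (i) for every term $s$, the induced term function (mapping a tuple of terms, one for each variable occurring in $s$, to the result of substituting them into $s$) is injective; and (ii) consequently every justification $s\to t$ of an arrow proportion $p\to q:\!\cdot\,r\to u$ in $\mathfrak T_{L,X}$ is a characteristic justification of it.
   Context: $L$ is a language of algebras (function symbols with ranks, constants as $0$-ary symbols), $X$ a denumerable set of variables, and $\mathfrak T_{L,X}$ the term algebra with universe the set $T_{L,X}$ of $L$-terms over $X$, each $f\in L$ interpreted as $f(p_1,\dots,p_{r(f)})$. $X(s)$ is the set of variables of $s$. A justification is a pair of terms $s\to t$ with $X(t)\subseteq X(s)$. $s\to t$ is a justification of the arrow proportion $p\to q:\!\cdot\,r\to u$ (with $p,q,r,u\in T_{L,X}$) if $p=s(\mathbf o)$, $q=t(\mathbf o)$ for some tuple $\mathbf o$ of terms and $r=s(\mathbf o')$, $u=t(\mathbf o')$ for some tuple $\mathbf o'$ of terms. It is a characteristic justification of $p\to q:\!\cdot\,r\to u$ if it is a justification of it and, for every $u'\in T_{L,X}$, being a justification of $p\to q:\!\cdot\,r\to u'$ implies $u'=u$. *)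

theory Defs
  imports Main "HOL-Library.FuncSet" "HOL-Library.Countable_Set"
begin

text \<open>Terms over a language whose function symbols have type 'f (with rank
function rk, constants are symbols of rank 0) and variables of type 'v.\<close>

datatype ('f, 'v) trm = Var 'v | Fun 'f "('f, 'v) trm list"

text \<open>Well-formed terms: every function symbol applied to exactly rk f arguments.
The universe T_{L,X} of the term algebra is the set of well-formed terms.\<close>
fun wf_trm :: "('f \<Rightarrow> nat) \<Rightarrow> ('f, 'v) trm \<Rightarrow> bool" where
  "wf_trm rk (Var x) = True"
| "wf_trm rk (Fun f ts) = (length ts = rk f \<and> (\<forall>t \<in> set ts. wf_trm rk t))"

definition terms :: "('f \<Rightarrow> nat) \<Rightarrow> ('f, 'v) trm set" where
  "terms rk = {t. wf_trm rk t}"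

fun vars :: "('f, 'v) trm \<Rightarrow> 'v set" where
  "vars (Var x) = {x}"
| "vars (Fun f ts) = (\<Union>t \<in> set ts. vars t)"

fun subst :: "('v \<Rightarrow> ('f, 'v) trm) \<Rightarrow> ('f, 'v) trm \<Rightarrow> ('f, 'v) trm" where
  "subst \<sigma> (Var x) = \<sigma> x"
| "subst \<sigma> (Fun f ts) = Fun f (map (subst \<sigma>) ts)"

definition term_fun :: "('f, 'v) trm \<Rightarrow> ('v \<Rightarrow> ('f, 'v) trm) \<Rightarrow> ('f, 'v) trm" where
  "term_fun s \<sigma> = subst \<sigma> s"

definition justification :: "('f \<Rightarrow> nat) \<Rightarrow> ('f, 'v) trm \<Rightarrow> ('f, 'v) trm \<Rightarrow> bool" where
  "justification rk s t \<longleftrightarrow> wf_trm rk s \<and> wf_trm rk t \<and> vars t \<subseteq> vars s"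

definition justification_of ::
  "('f \<Rightarrow> nat) \<Rightarrow> ('f, 'v) trm \<Rightarrow> ('f, 'v) trm \<Rightarrow>
   ('f, 'v) trm \<Rightarrow> ('f, 'v) trm \<Rightarrow> ('f, 'v) trm \<Rightarrow> ('f, 'v) trm \<Rightarrow> bool" where
  "justification_of rk s t p q r u \<longleftrightarrow>
     justification rk s t \<and>
     (\<exists>\<sigma>. (\<forall>x. wf_trm rk (\<sigma> x)) \<and> p = subst \<sigma> s \<and> q = subst \<sigma> t) \<and>
     (\<exists>\<sigma>'. (\<forall>x. wf_trm rk (\<sigma>' x)) \<and> r = subst \<sigma>' s \<and> u = subst \<sigma>' t)"

definition characteristic_justification_of ::
  "('f \<Rightarrow> nat) \<Rightarrow> ('f, 'v) trm \<Rightarrow> ('f, 'v) trm \<Rightarrow>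
   ('f, 'v) trm \<Rightarrow> ('f, 'v) trm \<Rightarrow> ('f, 'v) trm \<Rightarrow> ('f, 'v) trm \<Rightarrow> bool" where
  "characteristic_justification_of rk s t p q r u \<longleftrightarrow>
     justification_of rk s t p q r u \<and>
     (\<forall>u'. wf_trm rk u' \<longrightarrow> justification_of rk s t p q r u' \<longrightarrow> u' = u)"

end

theory Submission
  imports Defs
begin

text \<open>A term s(o) determines the value of o at every variable of s, by induction on s.
So the term function of s is injective on tuples indexed by X(s), and in a justification
s \<rightarrow> t of p \<rightarrow> q :\<cdot> r \<rightarrow> u the tuple o' with r = s(o') is unique on X(s) \<supseteq> X(t),
which pins down u = t(o').\<close>

lemma subst_eq_imp_agree_on_vars:
  assumes "subst \<sigma> s = subst \<tau> s" and "x \<in> vars s"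
  shows "\<sigma> x = \<tau> x"
  using assms
proof (induction s)
  case (Var y)
  then show ?case by simp
next
  case (Fun f ts)
  then obtain t where t: "t \<in> set ts" "x \<in> vars t" by auto
  from Fun.prems(1) have "map (subst \<sigma>) ts = map (subst \<tau>) ts" by simp
  with t have "subst \<sigma> t = subst \<tau> t" by (simp add: map_eq_conv)
  with Fun.IH t show ?case by blast
qed

lemma subst_cong_vars:
  "(\<And>x. x \<in> vars s \<Longrightarrow> \<sigma> x = \<tau> x) \<Longrightarrow> subst \<sigma> s = subst \<tau> s"
  by (induction s) auto

lemma inj_on_term_fun: "inj_on (term_fun s) (vars s \<rightarrow>\<^sub>E A)"
proof (rule inj_onI)
  fix \<sigma> \<tau>
  assume \<sigma>: "\<sigma> \<in> vars s \<rightarrow>\<^sub>E A" and \<tau>: "\<tau> \<in> vars s \<rightarrow>\<^sub>E A"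
    and eq: "term_fun s \<sigma> = term_fun s \<tau>"
  show "\<sigma> = \<tau>"
  proof (rule extensionalityI)
    show "\<sigma> \<in> extensional (vars s)" "\<tau> \<in> extensional (vars s)"
      using \<sigma> \<tau> by (simp_all add: PiE_iff)
  next
    fix x
    assume "x \<in> vars s"
    with eq show "\<sigma> x = \<tau> x"
      unfolding term_fun_def by (rule subst_eq_imp_agree_on_vars)
  qed
qed

lemma justification_of_unique_target:
  assumes "justification_of rk s t p q r u" and "justification_of rk s t p q r u'"
  shows "u' = u"
proof -
  from assms(1) obtain \<sigma> where \<sigma>: "r = subst \<sigma> s" "u = subst \<sigma> t"
    unfolding justification_of_def by blast
  from assms(2) obtain \<sigma>' where \<sigma>': "r = subst \<sigma>' s" "u' = subst \<sigma>' t"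
    and vars_t: "vars t \<subseteq> vars s"
    unfolding justification_of_def justification_def by blast
  have "\<sigma>' x = \<sigma> x" if "x \<in> vars t" for x
    using \<sigma>(1) \<sigma>'(1) vars_t that by (metis subsetD subst_eq_imp_agree_on_vars)
  then show "u' = u"
    unfolding \<sigma>(2) \<sigma>'(2) by (rule subst_cong_vars)
qed

lemma justification_of_imp_characteristic:
  "justification_of rk s t p q r u \<Longrightarrow> characteristic_justification_of rk s t p q r u"
  unfolding characteristic_justification_of_def
  using justification_of_unique_target by blast

theorem mainTheorem17:
  fixes rk :: "'f \<Rightarrow> nat"
  assumes "countable (UNIV :: 'v set)" and "infinite (UNIV :: 'v set)"
  shows "(\<forall>s :: ('f, 'v) trm. wf_trm rk s \<longrightarrow>
            inj_on (term_fun s) (vars s \<rightarrow>\<^sub>E terms rk))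
       \<and> (\<forall>(s :: ('f, 'v) trm) t p q r u.
            wf_trm rk p \<longrightarrow> wf_trm rk q \<longrightarrow> wf_trm rk r \<longrightarrow> wf_trm rk u \<longrightarrow>
            justification_of rk s t p q r u \<longrightarrow>
            characteristic_justification_of rk s t p q r u)"
  by (simp add: inj_on_term_fun justification_of_imp_characteristic)

end
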